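(* $V^{\otimes3}=[\omega_0,V]\oplus(V\otimes Q)$.
   Context: $\mathbb{K}$ is a field of characteristic zero and $V$ a symplectic $\mathbb{K}$-vector space of dimension $2g$ with symplectic basis $a_1,\ldots,a_g,b_1,\ldots,b_g$; $\omega_0=\sum_{i=1}^g(a_i\otimes b_i-b_i\otimes a_i)\in V^{\otimes2}$. $C\colon V^{\otimes2}\to\mathbb{K}$ is the pairing given by the symplectic form, $C(a_i\otimes b_j)=\delta_{ij}$, $C(b_i\otimes a_j)=-\delta_{ij}$, $C(a_i\otimes a_j)=C(b_i\otimes b_j)=0$, and $Q=\ker C$. $[\omega_0,V]=\{\omega_0 v-v\omega_0: v\in V\}\subset V^{\otimes3}$ (products in the tensor algebra). *)

theory Defs
  imports Main "HOL-Library.Function_Algebras"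
begin

text \<open>Coordinates: V = K^(2g) with basis vectors indexed by 0..2g-1;
 index i-1 is a_i and index g+i-1 is b_i (1 \<le> i \<le> g).
 Tensors in V^{\<otimes>k} are coefficient functions in the standard tensor basis,
 vanishing outside the index range.\<close>

definition Vsp :: "nat \<Rightarrow> (nat \<Rightarrow> 'a::field_char_0) set" where
  "Vsp g = {v. \<forall>i. 2*g \<le> i \<longrightarrow> v i = 0}"

definition V2 :: "nat \<Rightarrow> (nat \<Rightarrow> nat \<Rightarrow> 'a::field_char_0) set" where
  "V2 g = {t. \<forall>i j. (2*g \<le> i \<or> 2*g \<le> j) \<longrightarrow> t i j = 0}"

definition V3 :: "nat \<Rightarrow> (nat \<Rightarrow> nat \<Rightarrow> nat \<Rightarrow> 'a::field_char_0) set" where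
  "V3 g = {t. \<forall>i j k. (2*g \<le> i \<or> 2*g \<le> j \<or> 2*g \<le> k) \<longrightarrow> t i j k = 0}"

definition omega0 :: "nat \<Rightarrow> nat \<Rightarrow> nat \<Rightarrow> 'a::field_char_0" where
  "omega0 g i j = (if i < g \<and> j = g + i then 1
                   else if j < g \<and> i = g + j then -1 else 0)"

text \<open>The contraction C : V^{\<otimes>2} \<rightarrow> K given by the symplectic form:
  C(a_i\<otimes>b_j) = \<delta>_ij, C(b_i\<otimes>a_j) = -\<delta>_ij, C(a\<otimes>a) = C(b\<otimes>b) = 0, extended linearly.\<close>
definition Cpair :: "nat \<Rightarrow> (nat \<Rightarrow> nat \<Rightarrow> 'a::field_char_0) \<Rightarrow> 'a" where
  "Cpair g t = (\<Sum>i<g. t i (g + i) - t (g + i) i)"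

definition Qsp :: "nat \<Rightarrow> (nat \<Rightarrow> nat \<Rightarrow> 'a::field_char_0) set" where
  "Qsp g = {t \<in> V2 g. Cpair g t = 0}"

definition tprod21 :: "(nat \<Rightarrow> nat \<Rightarrow> 'a::field_char_0) \<Rightarrow> (nat \<Rightarrow> 'a) \<Rightarrow> nat \<Rightarrow> nat \<Rightarrow> nat \<Rightarrow> 'a" where
  "tprod21 w v = (\<lambda>i j k. w i j * v k)"

definition tprod12 :: "(nat \<Rightarrow> 'a::field_char_0) \<Rightarrow> (nat \<Rightarrow> nat \<Rightarrow> 'a) \<Rightarrow> nat \<Rightarrow> nat \<Rightarrow> nat \<Rightarrow> 'a" where
  "tprod12 v w = (\<lambda>i j k. v i * w j k)"

definition commOmegaV :: "nat \<Rightarrow> (nat \<Rightarrow> nat \<Rightarrow> nat \<Rightarrow> 'a::field_char_0) set" where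
  "commOmegaV g = {tprod21 (omega0 g) v - tprod12 v (omega0 g) | v. v \<in> Vsp g}"

definition VtensQ :: "nat \<Rightarrow> (nat \<Rightarrow> nat \<Rightarrow> nat \<Rightarrow> 'a::field_char_0) set" where
  "VtensQ g = {T. \<exists>n (vs :: nat \<Rightarrow> nat \<Rightarrow> 'a) qs.
      (\<forall>m<n. vs m \<in> Vsp g \<and> qs m \<in> Qsp g) \<and>
      T = (\<lambda>i j k. \<Sum>m<n. vs m i * qs m j k)}"

definition is_direct_sum :: "('b::ab_group_add) set \<Rightarrow> 'b set \<Rightarrow> 'b set \<Rightarrow> bool" where
  "is_direct_sum S A B \<longleftrightarrow> S = {x + y | x y. x \<in> A \<and> y \<in> B} \<and> A \<inter> B = {0}"

end

theory Submission
  imports Defs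
begin

text \<open>Let \<open>c : V\<^sup>\<otimes>\<^sup>3 \<rightarrow> V\<close> contract the last two tensor factors with \<open>C\<close>.
  Then \<open>V \<otimes> Q\<close> is exactly the kernel of \<open>c\<close>, while \<open>c(\<omega>\<^sub>0 v - v \<omega>\<^sub>0) = -(2g+1) v\<close>
  because \<open>C(\<omega>\<^sub>0) = 2g\<close>. As \<open>2g+1 \<noteq> 0\<close> in characteristic zero, the image of
  \<open>v \<mapsto> [\<omega>\<^sub>0,v]\<close> meets \<open>ker c\<close> only in \<open>0\<close>, and every \<open>T\<close> splits as
  \<open>[\<omega>\<^sub>0,v] + (T - [\<omega>\<^sub>0,v])\<close> with \<open>v = -c(T)/(2g+1)\<close>.\<close>

definition contract23 :: "nat \<Rightarrow> (nat \<Rightarrow> nat \<Rightarrow> nat \<Rightarrow> 'a::field_char_0) \<Rightarrow> nat \<Rightarrow> 'a" where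
  "contract23 g T i = Cpair g (T i)"

definition omega_comm :: "nat \<Rightarrow> (nat \<Rightarrow> 'a::field_char_0) \<Rightarrow> nat \<Rightarrow> nat \<Rightarrow> nat \<Rightarrow> 'a" where
  "omega_comm g v = tprod21 (omega0 g) v - tprod12 v (omega0 g)"

lemma commOmegaV_eq: "commOmegaV g = omega_comm g ` Vsp g"
  by (auto simp: commOmegaV_def omega_comm_def)

lemma contract23_diff: "contract23 g (A - B) i = contract23 g A i - contract23 g B i"
  by (simp add: contract23_def Cpair_def sum_subtractf[symmetric] algebra_simps)

lemma Cpair_omega0: "Cpair g (omega0 g) = (of_nat (2*g) :: 'a::field_char_0)"
proof -
  have "Cpair g (omega0 g) = (\<Sum>l<g. (2::'a))"
    unfolding Cpair_def omega0_def by (rule sum.cong) auto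
  then show ?thesis by simp
qed

lemma contract23_tprod12: "contract23 g (tprod12 v w) i = v i * Cpair g w"
  by (simp add: contract23_def Cpair_def tprod12_def sum_distrib_left right_diff_distrib)

lemma contract23_omega0_tprod21:
  assumes "v \<in> Vsp g"
  shows "contract23 g (tprod21 (omega0 g) v) i = - (v i :: 'a::field_char_0)"
proof -
  consider "i < g" | "g \<le> i" "i < 2*g" | "2*g \<le> i" by linarith
  then show ?thesis
  proof cases
    case 1
    then have "contract23 g (tprod21 (omega0 g) v) i = (\<Sum>l<g. if l = i then - v l else 0)"
      unfolding contract23_def Cpair_def tprod21_def omega0_def by (intro sum.cong) auto
    with 1 show ?thesis by simp
  next
    case 2
    then have "contract23 g (tprod21 (omega0 g) v) i
        = (\<Sum>l<g. if l = i - g then - v (g + l) else 0)"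
      unfolding contract23_def Cpair_def tprod21_def omega0_def by (intro sum.cong) auto
    moreover have "i - g < g" "g + (i - g) = i" using 2 by linarith+
    ultimately show ?thesis by simp
  next
    case 3
    then show ?thesis
      using assms by (simp add: contract23_def Cpair_def tprod21_def omega0_def Vsp_def)
  qed
qed

lemma contract23_omega_comm:
  assumes "v \<in> Vsp g"
  shows "contract23 g (omega_comm g v) i = - of_nat (2*g + 1) * (v i :: 'a::field_char_0)"
  using assms
  by (simp add: omega_comm_def contract23_diff contract23_omega0_tprod21 contract23_tprod12
      Cpair_omega0 algebra_simps)

lemma omega_comm_in_V3: "v \<in> Vsp g \<Longrightarrow> omega_comm g v \<in> V3 g"
  by (auto simp: omega_comm_def V3_def Vsp_def tprod21_def tprod12_def omega0_def)

lemma omega_comm_zero [simp]: "omega_comm g 0 = 0"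
  by (simp add: omega_comm_def tprod21_def tprod12_def zero_fun_def fun_diff_def)

lemma zero_in_Vsp [simp]: "0 \<in> Vsp g"
  by (simp add: Vsp_def)

lemma V3_add: "S \<in> V3 g \<Longrightarrow> T \<in> V3 g \<Longrightarrow> S + T \<in> V3 g"
  and V3_diff: "S \<in> V3 g \<Longrightarrow> T \<in> V3 g \<Longrightarrow> S - T \<in> V3 g"
  by (auto simp: V3_def)

lemma VtensQ_iff_contract23_zero:
  "T \<in> VtensQ g \<longleftrightarrow> T \<in> V3 g \<and> (\<forall>i. contract23 g T i = (0::'a::field_char_0))"
proof
  assume "T \<in> VtensQ g"
  then obtain n and vs :: "nat \<Rightarrow> nat \<Rightarrow> 'a" and qs
    where vq: "\<forall>m<n. vs m \<in> Vsp g \<and> qs m \<in> Qsp g"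
      and T: "T = (\<lambda>i j k. \<Sum>m<n. vs m i * qs m j k)"
    unfolding VtensQ_def by blast
  have "T \<in> V3 g"
    unfolding V3_def T using vq by (auto intro!: sum.neutral simp: Vsp_def Qsp_def V2_def)
  moreover have "contract23 g T i = (\<Sum>m<n. vs m i * Cpair g (qs m))" for i
    unfolding T contract23_def Cpair_def
    by (simp add: sum_subtractf[symmetric] sum_distrib_left right_diff_distrib sum.swap[of _ "{..<g}"])
  ultimately show "T \<in> V3 g \<and> (\<forall>i. contract23 g T i = 0)"
    using vq by (simp add: Qsp_def)
next
  assume T: "T \<in> V3 g \<and> (\<forall>i. contract23 g T i = 0)"
  define e :: "nat \<Rightarrow> nat \<Rightarrow> 'a" where "e m = (\<lambda>i. if i = m then 1 else 0)" for m
  have "\<forall>m<2*g. e m \<in> Vsp g \<and> T m \<in> Qsp g"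
    using T by (auto simp: e_def Vsp_def Qsp_def V2_def V3_def contract23_def)
  moreover have "T = (\<lambda>i j k. \<Sum>m<2*g. e m i * T m j k)"
  proof (intro ext)
    fix i j k
    have "(\<Sum>m<2*g. e m i * T m j k) = (\<Sum>m<2*g. if m = i then T i j k else 0)"
      by (intro sum.cong) (auto simp: e_def)
    then show "T i j k = (\<Sum>m<2*g. e m i * T m j k)"
      using T by (simp add: V3_def)
  qed
  ultimately show "T \<in> VtensQ g"
    unfolding VtensQ_def by blast
qed

lemma of_nat_odd_neq_zero: "(of_nat (2*g + 1) :: 'a::field_char_0) \<noteq> 0"
  by (metis of_nat_eq_0_iff add_is_0 one_neq_zero)

lemma omega_comm_in_VtensQ_imp_zero:
  assumes v: "v \<in> Vsp g" and "omega_comm g v \<in> VtensQ g"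
  shows "v = (0 :: nat \<Rightarrow> 'a::field_char_0)"
proof
  fix i
  have "- of_nat (2*g + 1) * v i = 0"
    using assms by (simp only: VtensQ_iff_contract23_zero contract23_omega_comm[OF v, symmetric])
  then have "v i = 0"
    using of_nat_odd_neq_zero by (metis mult_eq_0_iff neg_equal_0_iff_equal)
  then show "v i = 0 i" by simp
qed

lemma V3_split:
  fixes T :: "nat \<Rightarrow> nat \<Rightarrow> nat \<Rightarrow> 'a::field_char_0"
  assumes T: "T \<in> V3 g"
  defines "v \<equiv> \<lambda>i. - contract23 g T i / of_nat (2*g + 1)"
  shows "v \<in> Vsp g" and "T - omega_comm g v \<in> VtensQ g"
proof -
  show v: "v \<in> Vsp g"
    using T by (simp add: Vsp_def V3_def v_def contract23_def Cpair_def)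
  show "T - omega_comm g v \<in> VtensQ g"
    using T v of_nat_odd_neq_zero[where 'a='a, of g]
    by (simp add: VtensQ_iff_contract23_zero V3_diff omega_comm_in_V3
        contract23_diff contract23_omega_comm v_def field_simps)
qed

theorem lemma5p1:
  fixes g :: nat
  shows "is_direct_sum (V3 g :: (nat \<Rightarrow> nat \<Rightarrow> nat \<Rightarrow> 'a::field_char_0) set)
           (commOmegaV g) (VtensQ g)"
proof -
  have "T \<in> {x + y |x y. x \<in> commOmegaV g \<and> y \<in> VtensQ g}" if T: "T \<in> V3 g"
    for T :: "nat \<Rightarrow> nat \<Rightarrow> nat \<Rightarrow> 'a"
  proof -
    obtain v where "v \<in> Vsp g" "T - omega_comm g v \<in> VtensQ g"
      using V3_split[OF T] by blast
    moreover have "T = omega_comm g v + (T - omega_comm g v)" by simp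
    ultimately show ?thesis
      unfolding commOmegaV_eq by blast
  qed
  moreover have "{x + y |x y. x \<in> commOmegaV g \<and> y \<in> VtensQ g} \<subseteq> V3 g"
    by (auto simp: commOmegaV_eq VtensQ_iff_contract23_zero intro: V3_add omega_comm_in_V3)
  moreover have "commOmegaV g \<inter> VtensQ g = {0 :: nat \<Rightarrow> nat \<Rightarrow> nat \<Rightarrow> 'a}"
  proof -
    have "(0 :: nat \<Rightarrow> nat \<Rightarrow> nat \<Rightarrow> 'a) \<in> VtensQ g"
      by (simp add: VtensQ_iff_contract23_zero V3_def contract23_def Cpair_def)
    moreover have "(0 :: nat \<Rightarrow> nat \<Rightarrow> nat \<Rightarrow> 'a) \<in> omega_comm g ` Vsp g"
      by (rule image_eqI[where x = 0]) simp_all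
    ultimately show ?thesis
      by (auto simp: commOmegaV_eq dest: omega_comm_in_VtensQ_imp_zero)
  qed
  ultimately show ?thesis
    unfolding is_direct_sum_def by blast
qed

end
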